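(* Consider an MDP satisfying Assumption 1(b) and a policy $\pi$ inducing an ergodic chain. Suppose there exist a function $f:S\to[0,\infty)$ and constants $c_1>0$, $c_2\ge0$ such that for all states $s$, $$\mathbb E_\pi\big[f(s_{t+1})-f(s_t)\,\big|\,s_t=s\big]\ \le\ c_1\,r(s,\pi)+c_2.$$ Then there exist constants $c_3,c_4\ge0$ (one may take $c_3=2/c_1$) such that $V_\pi(s)\ge -c_3 f(s)-c_4$ for all $s\in S$.
   Context: MDP setting: countably infinite state space $S$, finite action set $A$, transition kernel $\mathbb P(s'\mid s,a)$, reward $r(s,a)$; for a policy $\pi$, $r(s,\pi)=\sum_a\pi(a\mid s)r(s,a)$ and $(s_t)$ is the Markov chain under $\pi$. $r_{\max}(s)=\max_a r(s,a)$. Assumption 1(b): for every $z\in\mathbb R$ the set $\{s:r_{\max}(s)\ge z\}$ is finite. $J_\pi$ is the average reward of $\pi$ (expectation of $r(s,\pi)$ under the stationary distribution). A distinguished state $\vec 0$ is fixed, and the relative value function $V_\pi$ solves $J_\pi+V_\pi(s)=r(s,\pi)+\sum_{s'}\mathbb P_\pi(s'\mid s)V_\pi(s')$ with $V_\pi(\vec 0)=0$, where $\mathbb P_\pi(s'\mid s)=\sum_a\pi(a\mid s)\mathbb P(s'\mid s,a)$; equivalently $V_\pi(s)$ is the expected sum of $r(s_t,a_t)-J_\pi$ from $s_0=s$ until first hitting $\vec 0$. *)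

theory Defs
  imports "HOL-Analysis.Analysis"
begin

text \<open>MDP with countable state type 's, finite action type 'a,
  transition kernel P s a s' = P(s' | s,a), reward r s a.
  A (stationary randomised) policy is pol s a = pol(a | s).\<close>

definition mdp :: "('s \<Rightarrow> 'a \<Rightarrow> 's \<Rightarrow> real) \<Rightarrow> bool" where
  "mdp P \<longleftrightarrow> (\<forall>s a s'. P s a s' \<ge> 0) \<and> (\<forall>s a. (P s a has_sum 1) UNIV)"

definition policy :: "('s \<Rightarrow> 'a::finite \<Rightarrow> real) \<Rightarrow> bool" where
  "policy pol \<longleftrightarrow> (\<forall>s a. pol s a \<ge> 0) \<and> (\<forall>s. (\<Sum>a\<in>UNIV. pol s a) = 1)"

definition r_pi :: "('s \<Rightarrow> 'a::finite \<Rightarrow> real) \<Rightarrow> ('s \<Rightarrow> 'a \<Rightarrow> real) \<Rightarrow> 's \<Rightarrow> real" where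
  "r_pi r pol s = (\<Sum>a\<in>UNIV. pol s a * r s a)"

definition r_max :: "('s \<Rightarrow> 'a::finite \<Rightarrow> real) \<Rightarrow> 's \<Rightarrow> real" where
  "r_max r s = Max (range (r s))"

definition assumption_1b :: "('s \<Rightarrow> 'a::finite \<Rightarrow> real) \<Rightarrow> bool" where
  "assumption_1b r \<longleftrightarrow> (\<forall>z::real. finite {s. r_max r s \<ge> z})"

definition P_pi :: "('s \<Rightarrow> 'a::finite \<Rightarrow> 's \<Rightarrow> real) \<Rightarrow> ('s \<Rightarrow> 'a \<Rightarrow> real) \<Rightarrow> 's \<Rightarrow> 's \<Rightarrow> real" where
  "P_pi P pol s s' = (\<Sum>a\<in>UNIV. pol s a * P s a s')"

fun P_pi_n :: "('s \<Rightarrow> 'a::finite \<Rightarrow> 's \<Rightarrow> real) \<Rightarrow> ('s \<Rightarrow> 'a \<Rightarrow> real) \<Rightarrow> nat \<Rightarrow> 's \<Rightarrow> 's \<Rightarrow> real" where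
  "P_pi_n P pol 0 s s' = (if s' = s then 1 else 0)"
| "P_pi_n P pol (Suc n) s s' = (\<Sum>\<^sub>\<infinity>u. P_pi_n P pol n s u * P_pi P pol u s')"

definition irreducible :: "('s \<Rightarrow> 'a::finite \<Rightarrow> 's \<Rightarrow> real) \<Rightarrow> ('s \<Rightarrow> 'a \<Rightarrow> real) \<Rightarrow> bool" where
  "irreducible P pol \<longleftrightarrow> (\<forall>s s'. \<exists>n. P_pi_n P pol n s s' > 0)"

definition stationary :: "('s \<Rightarrow> 'a::finite \<Rightarrow> 's \<Rightarrow> real) \<Rightarrow> ('s \<Rightarrow> 'a \<Rightarrow> real) \<Rightarrow> ('s \<Rightarrow> real) \<Rightarrow> bool" where
  "stationary P pol mu \<longleftrightarrow> (\<forall>s. mu s \<ge> 0) \<and> (mu has_sum 1) UNIV \<and>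
     (\<forall>s'. ((\<lambda>s. mu s * P_pi P pol s s') has_sum mu s') UNIV)"

text \<open>Ergodic = irreducible and positive recurrent; for an irreducible chain, positive
  recurrence is equivalent to the existence of a stationary distribution.\<close>
definition ergodic :: "('s \<Rightarrow> 'a::finite \<Rightarrow> 's \<Rightarrow> real) \<Rightarrow> ('s \<Rightarrow> 'a \<Rightarrow> real) \<Rightarrow> bool" where
  "ergodic P pol \<longleftrightarrow> irreducible P pol \<and> (\<exists>mu. stationary P pol mu)"

definition avg_reward :: "('s \<Rightarrow> 'a::finite \<Rightarrow> real) \<Rightarrow> ('s \<Rightarrow> 'a \<Rightarrow> real) \<Rightarrow> ('s \<Rightarrow> real) \<Rightarrow> real" where
  "avg_reward r pol mu = (\<Sum>\<^sub>\<infinity>s. mu s * r_pi r pol s)"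

text \<open>Taboo probabilities: taboo_prob P pol s0 s n s' = Pr_s(s_n = s', s_k \<noteq> s0 for all k \<le> n),
  i.e. the probability that the chain started in s is at s' at time n and the hitting time
  tau = min {t \<ge> 0. s_t = s0} is > n.\<close>
fun taboo_prob :: "('s \<Rightarrow> 'a::finite \<Rightarrow> 's \<Rightarrow> real) \<Rightarrow> ('s \<Rightarrow> 'a \<Rightarrow> real) \<Rightarrow> 's \<Rightarrow> 's \<Rightarrow> nat \<Rightarrow> 's \<Rightarrow> real" where
  "taboo_prob P pol s0 s 0 s' = (if s' = s \<and> s \<noteq> s0 then 1 else 0)"
| "taboo_prob P pol s0 s (Suc n) s' =
     (if s' = s0 then 0 else (\<Sum>\<^sub>\<infinity>u. taboo_prob P pol s0 s n u * P_pi P pol u s'))"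

text \<open>Summand family of V_pi(s) = E_s[ sum_{t < tau} (r(s_t,pol) - J) ], indexed by (t, s_t).\<close>
definition V_terms :: "('s \<Rightarrow> 'a::finite \<Rightarrow> 's \<Rightarrow> real) \<Rightarrow> ('s \<Rightarrow> 'a \<Rightarrow> real) \<Rightarrow> ('s \<Rightarrow> 'a \<Rightarrow> real)
    \<Rightarrow> 's \<Rightarrow> real \<Rightarrow> 's \<Rightarrow> nat \<times> 's \<Rightarrow> real" where
  "V_terms P r pol s0 J s = (\<lambda>(t, s'). taboo_prob P pol s0 s t s' * (r_pi r pol s' - J))"

definition rel_value :: "('s \<Rightarrow> 'a::finite \<Rightarrow> 's \<Rightarrow> real) \<Rightarrow> ('s \<Rightarrow> 'a \<Rightarrow> real) \<Rightarrow> ('s \<Rightarrow> 'a \<Rightarrow> real)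
    \<Rightarrow> 's \<Rightarrow> real \<Rightarrow> 's \<Rightarrow> real" where
  "rel_value P r pol s0 J s = (\<Sum>\<^sub>\<infinity>x. V_terms P r pol s0 J s x)"

end

theory Submission
  imports Defs
begin

text \<open>Let \<open>R\<close> bound \<open>r(\<cdot>,\<pi>)\<close> from above (Assumption 1(b)), \<open>C = c\<^sub>2 + c\<^sub>1 R\<close> and
  \<open>g = c\<^sub>1 (R - r) \<ge> 0\<close>, so that the drift condition reads \<open>Qf - f \<le> C - g\<close>. For the hitting time
  \<open>\<tau>\<close> of \<open>s0\<close>, \<open>V(s) = (R - J) E\<^sub>s[\<tau>] - E\<^sub>s[\<Sum>\<^sub>t\<^sub><\<^sub>\<tau> g(s\<^sub>t)] / c\<^sub>1\<close> with \<open>J \<le> R\<close>, so it suffices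
  to bound the expected cost before \<open>\<tau>\<close> by \<open>2 f(s) + const\<close>.
  On the finite set \<open>A\<close> where \<open>g < 2C\<close>, irreducibility gives a horizon \<open>H\<close> and \<open>d > 0\<close> with
  \<open>P\<^sub>x(\<tau> \<le> H) \<ge> d\<close> for all \<open>x \<in> A\<close>; adding \<open>(2C/d) E[min \<tau> H]\<close> to \<open>f\<close> gives a Lyapunov function \<open>\<Phi>\<close>
  with \<open>Q\<Phi> + g + 2C \<cdot> 1\<^sub>A \<le> \<Phi> + C\<close> off \<open>s0\<close>. By the comparison theorem the cost \<open>w = g + 2C \<cdot> 1\<^sub>A \<ge> 2C\<close>
  accumulated before \<open>\<tau>\<close> is at most \<open>\<Phi>(s) + C E\<^sub>s[\<tau>]\<close>, i.e. at most \<open>\<Phi>(s)\<close> plus half of itself;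
  hence it is bounded by \<open>2 \<Phi>(s) \<le> 2 f(s) + 4CH/d\<close>.\<close>

lemma nn_integral_count_space_eq_infsum:
  fixes g :: "'b \<Rightarrow> real"
  assumes "\<And>x. g x \<ge> 0" and "g summable_on UNIV"
  shows "(\<integral>\<^sup>+x. ennreal (g x) \<partial>count_space UNIV) = ennreal (\<Sum>\<^sub>\<infinity>x. g x)"
proof -
  have "Infinite_Set_Sum.abs_summable_on g UNIV"
    using assms abs_summable_equivalent summable_on_iff_abs_summable_on_real by blast
  then show ?thesis
    using assms(1) nn_integral_conv_infsetsum infsetsum_infsum by fastforce
qed

lemma summable_on_if_nn_integral_finite:
  fixes g :: "'b \<Rightarrow> real"
  assumes "\<And>x. g x \<ge> 0" and "(\<integral>\<^sup>+x. ennreal (g x) \<partial>count_space UNIV) \<noteq> \<infinity>"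
  shows "g summable_on UNIV"
proof -
  have "integrable (count_space UNIV) g"
    using assms by (auto intro!: integrableI_nonneg simp: less_top)
  then show ?thesis
    by (metis abs_summable_equivalent abs_summable_on_def abs_summable_summable)
qed

lemma nn_integral_count_space_swap:
  fixes F :: "'x::countable \<Rightarrow> 'y \<Rightarrow> ennreal"
  shows "(\<integral>\<^sup>+x. (\<integral>\<^sup>+y. F x y \<partial>count_space UNIV) \<partial>count_space UNIV)
       = (\<integral>\<^sup>+y. (\<integral>\<^sup>+x. F x y \<partial>count_space UNIV) \<partial>count_space UNIV)"
  by (rule nn_integral_count_space_nn_integral[symmetric]) auto

lemma nn_integral_count_space_point:
  "(\<integral>\<^sup>+y. c * indicator {x} y \<partial>count_space UNIV) = (c :: ennreal)"
  by (simp add: nn_integral_cmult_indicator)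

lemma ennreal_absorb_le:
  fixes X F C M :: ennreal
  assumes "X \<le> F + C * M" and "2 * C * M \<le> X" and "F \<noteq> \<infinity>" and "C \<noteq> \<infinity>" and "M \<noteq> \<infinity>"
  shows "X \<le> 2 * F"
proof -
  have "X \<noteq> \<infinity>"
    using neq_top_trans[OF _ assms(1)] assms(3-5) by (simp add: ennreal_mult_eq_top_iff)
  have "X + X \<le> (F + C * M) + (F + C * M)"
    using assms(1) by (rule add_mono) (rule assms(1))
  also have "\<dots> = 2 * F + 2 * C * M"
    by (simp add: mult_2 distrib_right add_ac)
  also have "\<dots> \<le> 2 * F + X"
    using assms(2) by (rule add_left_mono)
  finally have "X + X \<le> X + 2 * F"
    by (simp only: add.commute)
  then show ?thesis
    using \<open>X \<noteq> \<infinity>\<close> by (simp only: ennreal_add_left_cancel_le) simp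
qed

lemma has_sum_prod_if_row_sums_bounded:
  fixes F :: "nat \<times> 'b \<Rightarrow> real"
  assumes nonneg: "\<And>p. F p \<ge> 0"
    and rows: "\<And>n. ((\<lambda>x. F (n, x)) has_sum b n) UNIV"
    and partial_le: "\<And>K. (\<Sum>n<K. b n) \<le> B"
  obtains S where "(F has_sum S) UNIV" and "0 \<le> S" and "S \<le> B"
proof -
  have b_nonneg: "b n \<ge> 0" for n
    using rows nonneg by (rule has_sum_nonneg)
  have "summable b"
    by (rule summableI_nonneg_bounded[OF b_nonneg partial_le])
  then have b_has_sum: "(b has_sum suminf b) UNIV"
    using b_nonneg by (intro sums_nonneg_imp_has_sum) (auto simp: summable_sums)
  have "F summable_on Sigma UNIV (\<lambda>_. UNIV)"
    using b_has_sum nonneg by (intro summable_on_SigmaI[OF rows]) (auto intro: has_sum_imp_summable)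
  then have "(F has_sum suminf b) UNIV"
    using has_sum_SigmaI[OF rows b_has_sum] by simp
  moreover have "0 \<le> suminf b" and "suminf b \<le> B"
    using \<open>summable b\<close> b_nonneg partial_le by (auto intro: suminf_nonneg suminf_le_const)
  ultimately show ?thesis
    using that by blast
qed

locale policy_chain =
  fixes P :: "'s::countable \<Rightarrow> 'a::finite \<Rightarrow> 's \<Rightarrow> real"
    and pol :: "'s \<Rightarrow> 'a \<Rightarrow> real"
    and s0 :: 's
  assumes mdp: "mdp P" and policy: "policy pol"
begin

abbreviation "Q \<equiv> P_pi P pol"
abbreviation "Pn n x y \<equiv> P_pi_n P pol n x y"
abbreviation "taboo s n x \<equiv> taboo_prob P pol s0 s n x"

lemma P_pi_nonneg: "Q u x \<ge> 0"
  using mdp policy unfolding mdp_def policy_def P_pi_def by (auto intro!: sum_nonneg)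

lemma nn_integral_P_pi: "(\<integral>\<^sup>+x. ennreal (Q u x) \<partial>count_space UNIV) = 1"
proof -
  have P1: "(\<integral>\<^sup>+x. ennreal (P u a x) \<partial>count_space UNIV) = 1" for a
    using nn_integral_count_space_eq_infsum[of "P u a"] mdp unfolding mdp_def
    by (metis ennreal_1 has_sum_imp_summable infsumI)
  have "(\<integral>\<^sup>+x. ennreal (Q u x) \<partial>count_space UNIV)
      = (\<integral>\<^sup>+x. (\<Sum>a\<in>UNIV. ennreal (pol u a) * ennreal (P u a x)) \<partial>count_space UNIV)"
    unfolding P_pi_def using mdp policy unfolding mdp_def policy_def
    by (intro nn_integral_cong) (simp add: ennreal_mult'' flip: sum_ennreal)
  also have "\<dots> = (\<Sum>a\<in>UNIV. ennreal (pol u a) * (\<integral>\<^sup>+x. ennreal (P u a x) \<partial>count_space UNIV))"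
    by (simp add: nn_integral_sum nn_integral_cmult)
  also have "\<dots> = 1"
    using policy unfolding policy_def by (simp add: P1 sum_ennreal)
  finally show ?thesis .
qed

lemma P_pi_le_1: "Q u x \<le> 1"
  using nn_integral_ge_point[of x UNIV "\<lambda>x. ennreal (Q u x)"] nn_integral_P_pi P_pi_nonneg
  by simp

lemma nn_integral_step:
  assumes "\<And>u. a u \<ge> 0"
  shows "(\<integral>\<^sup>+x. (\<integral>\<^sup>+u. ennreal (a u * Q u x) \<partial>count_space UNIV) \<partial>count_space UNIV)
       = (\<integral>\<^sup>+u. ennreal (a u) \<partial>count_space UNIV)"
proof -
  have "(\<integral>\<^sup>+x. (\<integral>\<^sup>+u. ennreal (a u * Q u x) \<partial>count_space UNIV) \<partial>count_space UNIV)
      = (\<integral>\<^sup>+u. (\<integral>\<^sup>+x. ennreal (a u) * ennreal (Q u x) \<partial>count_space UNIV) \<partial>count_space UNIV)"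
    by (subst nn_integral_count_space_swap) (simp add: ennreal_mult assms P_pi_nonneg)
  also have "\<dots> = (\<integral>\<^sup>+u. ennreal (a u) \<partial>count_space UNIV)"
    by (simp add: nn_integral_cmult nn_integral_P_pi)
  finally show ?thesis .
qed

lemma ennreal_infsum_step:
  assumes "\<And>u. a u \<ge> 0" and "(\<integral>\<^sup>+u. ennreal (a u) \<partial>count_space UNIV) \<noteq> \<infinity>"
  shows "ennreal (\<Sum>\<^sub>\<infinity>u. a u * Q u x) = (\<integral>\<^sup>+u. ennreal (a u * Q u x) \<partial>count_space UNIV)"
proof -
  have "(\<integral>\<^sup>+u. ennreal (a u * Q u x) \<partial>count_space UNIV) \<le> (\<integral>\<^sup>+u. ennreal (a u) \<partial>count_space UNIV)"
    by (intro nn_integral_mono) (simp add: assms P_pi_nonneg P_pi_le_1 mult_left_le)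
  then have "(\<integral>\<^sup>+u. ennreal (a u * Q u x) \<partial>count_space UNIV) \<noteq> \<infinity>"
    using assms(2) by (metis infinity_ennreal_def top.extremum_uniqueI)
  then have "(\<lambda>u. a u * Q u x) summable_on UNIV"
    by (rule summable_on_if_nn_integral_finite[rotated]) (simp add: assms P_pi_nonneg)
  then show ?thesis
    by (rule nn_integral_count_space_eq_infsum[symmetric, rotated]) (simp add: assms P_pi_nonneg)
qed

lemma taboo_prob_nonneg: "taboo s n x \<ge> 0"
  by (induction n arbitrary: x) (auto intro!: infsum_nonneg mult_nonneg_nonneg P_pi_nonneg)

lemma taboo_prob_s0: "taboo s n s0 = 0"
  by (cases n) auto

text \<open>The bound on the total mass keeps the sums defining the next step finite, so the two
  statements are proved by a joint induction.\<close>

lemma taboo_prob_mass_Suc: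
  "(\<integral>\<^sup>+u. ennreal (taboo s n u) \<partial>count_space UNIV) \<le> 1 \<and>
   (\<forall>x. ennreal (taboo s (Suc n) x) =
      (if x = s0 then 0 else \<integral>\<^sup>+u. ennreal (taboo s n u * Q u x) \<partial>count_space UNIV))"
proof (induction n)
  case 0
  have "(\<integral>\<^sup>+u. ennreal (taboo s 0 u) \<partial>count_space UNIV) \<le> (\<integral>\<^sup>+u. 1 * indicator {s} u \<partial>count_space UNIV)"
    by (intro nn_integral_mono) (auto split: split_indicator)
  then have mass: "(\<integral>\<^sup>+u. ennreal (taboo s 0 u) \<partial>count_space UNIV) \<le> 1"
    by (simp only: nn_integral_count_space_point)
  moreover have fin: "(\<integral>\<^sup>+u. ennreal (taboo s 0 u) \<partial>count_space UNIV) \<noteq> \<infinity>"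
    using neq_top_trans[OF ennreal_one_neq_top mass] by simp
  moreover have "ennreal (taboo s (Suc 0) x) =
      (if x = s0 then 0 else \<integral>\<^sup>+u. ennreal (taboo s 0 u * Q u x) \<partial>count_space UNIV)" for x
    using ennreal_infsum_step[of "taboo s 0" x, OF taboo_prob_nonneg] fin by simp
  ultimately show ?case by blast
next
  case (Suc n)
  have "(\<integral>\<^sup>+u. ennreal (taboo s (Suc n) u) \<partial>count_space UNIV)
      \<le> (\<integral>\<^sup>+x. (\<integral>\<^sup>+u. ennreal (taboo s n u * Q u x) \<partial>count_space UNIV) \<partial>count_space UNIV)"
    using Suc by (intro nn_integral_mono) (auto simp del: taboo_prob.simps)
  also have "\<dots> = (\<integral>\<^sup>+u. ennreal (taboo s n u) \<partial>count_space UNIV)"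
    by (rule nn_integral_step[OF taboo_prob_nonneg])
  finally have mass: "(\<integral>\<^sup>+u. ennreal (taboo s (Suc n) u) \<partial>count_space UNIV) \<le> 1"
    using Suc by (meson order_trans)
  moreover have fin: "(\<integral>\<^sup>+u. ennreal (taboo s (Suc n) u) \<partial>count_space UNIV) \<noteq> \<infinity>"
    using neq_top_trans[OF ennreal_one_neq_top mass] by simp
  moreover have "ennreal (taboo s (Suc (Suc n)) x) =
      (if x = s0 then 0 else \<integral>\<^sup>+u. ennreal (taboo s (Suc n) u * Q u x) \<partial>count_space UNIV)" for x
    using ennreal_infsum_step[of "taboo s (Suc n)" x, OF taboo_prob_nonneg] fin
    by (simp only: taboo_prob.simps(2)[of P pol s0 s "Suc n"]) simp
  ultimately show ?case by blast
qed

lemma taboo_prob_Suc_ennreal: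
  "x \<noteq> s0 \<Longrightarrow> ennreal (taboo s (Suc n) x) = (\<integral>\<^sup>+u. ennreal (taboo s n u * Q u x) \<partial>count_space UNIV)"
  using taboo_prob_mass_Suc by (simp del: taboo_prob.simps)

lemma taboo_prob_Suc_le:
  "ennreal (taboo s (Suc n) x) \<le> (\<integral>\<^sup>+u. ennreal (taboo s n u * Q u x) \<partial>count_space UNIV)"
  by (cases "x = s0") (simp_all add: taboo_prob_Suc_ennreal taboo_prob_s0 del: taboo_prob.simps)

lemma P_pi_n_distribution:
  "(\<forall>y. Pn n x y \<ge> 0) \<and> (\<integral>\<^sup>+y. ennreal (Pn n x y) \<partial>count_space UNIV) = 1 \<and>
   (\<forall>y. ennreal (Pn (Suc n) x y) = (\<integral>\<^sup>+u. ennreal (Pn n x u * Q u y) \<partial>count_space UNIV))"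
proof (induction n)
  case 0
  have "(\<integral>\<^sup>+u. ennreal (Pn 0 x u) \<partial>count_space UNIV) = (\<integral>\<^sup>+u. 1 * indicator {x} u \<partial>count_space UNIV)"
    by (intro nn_integral_cong) (auto split: split_indicator)
  then have mass: "(\<integral>\<^sup>+u. ennreal (Pn 0 x u) \<partial>count_space UNIV) = 1"
    by (simp only: nn_integral_count_space_point)
  have "ennreal (Pn (Suc 0) x y) = (\<integral>\<^sup>+u. ennreal (Pn 0 x u * Q u y) \<partial>count_space UNIV)" for y
    using ennreal_infsum_step[of "Pn 0 x" y] mass by simp
  with mass show ?case by simp
next
  case (Suc n)
  have nonneg: "\<And>y. Pn (Suc n) x y \<ge> 0"
    using Suc by (auto intro!: infsum_nonneg mult_nonneg_nonneg P_pi_nonneg)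
  have mass: "(\<integral>\<^sup>+y. ennreal (Pn (Suc n) x y) \<partial>count_space UNIV) = 1"
    using Suc nn_integral_step[of "Pn n x"] by simp
  have "ennreal (Pn (Suc (Suc n)) x y) = (\<integral>\<^sup>+u. ennreal (Pn (Suc n) x u * Q u y) \<partial>count_space UNIV)" for y
    using ennreal_infsum_step[of "Pn (Suc n) x" y, OF nonneg] mass
    by (simp only: P_pi_n.simps(2)[of P pol "Suc n"]) simp
  with nonneg mass show ?case by blast
qed

lemma P_pi_n_nonneg: "Pn n x y \<ge> 0"
  using P_pi_n_distribution by blast

lemma taboo_prob_le_P_pi_n: "taboo x n y \<le> Pn n x y"
proof (induction n arbitrary: y)
  case 0
  then show ?case by simp
next
  case (Suc n)
  have "ennreal (taboo x (Suc n) y) \<le> (\<integral>\<^sup>+u. ennreal (taboo x n u * Q u y) \<partial>count_space UNIV)"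
    by (rule taboo_prob_Suc_le)
  also have "\<dots> \<le> (\<integral>\<^sup>+u. ennreal (Pn n x u * Q u y) \<partial>count_space UNIV)"
    by (intro nn_integral_mono ennreal_leI mult_right_mono Suc P_pi_nonneg)
  also have "\<dots> = ennreal (Pn (Suc n) x y)"
    using P_pi_n_distribution by simp
  finally show ?case
    using P_pi_n_nonneg[of "Suc n" x y] by (simp del: taboo_prob.simps P_pi_n.simps)
qed

text \<open>\<open>survival s n\<close> is the probability, started in \<open>s\<close>, of not having visited \<open>s0\<close> at
  the times \<open>0, \<dots>, n\<close>.\<close>

definition survival :: "'s \<Rightarrow> nat \<Rightarrow> ennreal" where
  "survival s n = (\<integral>\<^sup>+u. ennreal (taboo s n u) \<partial>count_space UNIV)"

lemma survival_le_1: "survival s n \<le> 1"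
  using taboo_prob_mass_Suc unfolding survival_def by blast

lemma survival_0: "survival s 0 = (if s = s0 then 0 else 1)"
proof -
  have "survival s 0 = (\<integral>\<^sup>+u. (if s = s0 then 0 else 1) * indicator {s} u \<partial>count_space UNIV)"
    unfolding survival_def by (intro nn_integral_cong) (auto split: split_indicator)
  then show ?thesis
    by (simp only: nn_integral_count_space_point)
qed

lemma survival_Suc_le: "survival s (Suc n) \<le> survival s n"
proof -
  have "survival s (Suc n)
      \<le> (\<integral>\<^sup>+x. (\<integral>\<^sup>+u. ennreal (taboo s n u * Q u x) \<partial>count_space UNIV) \<partial>count_space UNIV)"
    unfolding survival_def by (intro nn_integral_mono taboo_prob_Suc_le)
  also have "\<dots> = survival s n"
    unfolding survival_def by (rule nn_integral_step[OF taboo_prob_nonneg])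
  finally show ?thesis .
qed

lemma survival_antimono: "n \<le> k \<Longrightarrow> survival s k \<le> survival s n"
  by (induction k rule: dec_induct) (auto intro: order_trans[OF survival_Suc_le])

lemma survival_add_P_pi_n_le_1: "survival x n + ennreal (Pn n x s0) \<le> 1"
proof -
  have "survival x n + ennreal (Pn n x s0)
      = (\<integral>\<^sup>+u. ennreal (taboo x n u) + ennreal (Pn n x s0) * indicator {s0} u \<partial>count_space UNIV)"
    unfolding survival_def by (subst nn_integral_add) (auto simp: nn_integral_cmult_indicator)
  also have "\<dots> \<le> (\<integral>\<^sup>+u. ennreal (Pn n x u) \<partial>count_space UNIV)"
    by (intro nn_integral_mono)
      (auto split: split_indicator simp: taboo_prob_s0 taboo_prob_le_P_pi_n intro: ennreal_leI)
  also have "\<dots> = 1"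
    using P_pi_n_distribution by blast
  finally show ?thesis .
qed

lemma taboo_prob_Suc_first_step:
  assumes "x \<noteq> s0"
  shows "ennreal (taboo x (Suc n) z) = (\<integral>\<^sup>+y. ennreal (Q x y) * ennreal (taboo y n z) \<partial>count_space UNIV)"
proof (induction n arbitrary: z)
  case 0
  show ?case
  proof (cases "z = s0")
    case True
    then show ?thesis
      by (simp add: taboo_prob_s0 del: taboo_prob.simps)
  next
    case False
    have "ennreal (taboo x (Suc 0) z) = (\<integral>\<^sup>+u. ennreal (taboo x 0 u * Q u z) \<partial>count_space UNIV)"
      using False by (rule taboo_prob_Suc_ennreal)
    also have "\<dots> = (\<integral>\<^sup>+u. ennreal (Q x z) * indicator {x} u \<partial>count_space UNIV)"
      using assms by (intro nn_integral_cong) (auto split: split_indicator)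
    also have "\<dots> = (\<integral>\<^sup>+y. ennreal (Q x z) * indicator {z} y \<partial>count_space UNIV)"
      by (simp only: nn_integral_count_space_point)
    also have "\<dots> = (\<integral>\<^sup>+y. ennreal (Q x y) * ennreal (taboo y 0 z) \<partial>count_space UNIV)"
      using False by (intro nn_integral_cong) (auto split: split_indicator)
    finally show ?thesis .
  qed
next
  case (Suc n)
  show ?case
  proof (cases "z = s0")
    case True
    then show ?thesis
      by (simp add: taboo_prob_s0 del: taboo_prob.simps)
  next
    case False
    have "ennreal (taboo x (Suc (Suc n)) z)
        = (\<integral>\<^sup>+u. ennreal (taboo x (Suc n) u) * ennreal (Q u z) \<partial>count_space UNIV)"
      using taboo_prob_Suc_ennreal[OF False]
      by (simp add: ennreal_mult taboo_prob_nonneg P_pi_nonneg del: taboo_prob.simps)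
    also have "\<dots> = (\<integral>\<^sup>+u. (\<integral>\<^sup>+y. ennreal (Q x y) * ennreal (taboo y n u) * ennreal (Q u z)
        \<partial>count_space UNIV) \<partial>count_space UNIV)"
      using Suc by (simp add: nn_integral_multc)
    also have "\<dots> = (\<integral>\<^sup>+y. (\<integral>\<^sup>+u. ennreal (Q x y) * (ennreal (taboo y n u) * ennreal (Q u z))
        \<partial>count_space UNIV) \<partial>count_space UNIV)"
      by (subst nn_integral_count_space_swap) (simp add: mult.assoc)
    also have "\<dots> = (\<integral>\<^sup>+y. ennreal (Q x y) * ennreal (taboo y (Suc n) z) \<partial>count_space UNIV)"
      using taboo_prob_Suc_ennreal[OF False]
      by (simp add: nn_integral_cmult ennreal_mult taboo_prob_nonneg P_pi_nonneg del: taboo_prob.simps)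
    finally show ?thesis .
  qed
qed

lemma survival_Suc_first_step:
  "x \<noteq> s0 \<Longrightarrow> survival x (Suc n) = (\<integral>\<^sup>+y. ennreal (Q x y) * survival y n \<partial>count_space UNIV)"
  unfolding survival_def
  by (simp add: taboo_prob_Suc_first_step del: taboo_prob.simps)
    (subst nn_integral_count_space_swap, simp add: nn_integral_cmult)

lemma taboo_comparison_step:
  fixes Phi w :: "'s \<Rightarrow> ennreal" and C :: ennreal
  assumes drift: "\<And>u. u \<noteq> s0 \<Longrightarrow> (\<integral>\<^sup>+x. ennreal (Q u x) * Phi x \<partial>count_space UNIV) + w u \<le> Phi u + C"
  shows "(\<integral>\<^sup>+u. ennreal (taboo s (Suc n) u) * Phi u \<partial>count_space UNIV)
           + (\<integral>\<^sup>+u. ennreal (taboo s n u) * w u \<partial>count_space UNIV)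
         \<le> (\<integral>\<^sup>+u. ennreal (taboo s n u) * Phi u \<partial>count_space UNIV) + C * survival s n"
    (is "?T (Suc n) + ?W \<le> ?T n + _")
proof -
  have "?T (Suc n) \<le> (\<integral>\<^sup>+x. (\<integral>\<^sup>+u. ennreal (taboo s n u) * ennreal (Q u x) \<partial>count_space UNIV) * Phi x
      \<partial>count_space UNIV)"
    using taboo_prob_Suc_le
    by (intro nn_integral_mono mult_right_mono)
      (simp_all add: ennreal_mult taboo_prob_nonneg P_pi_nonneg del: taboo_prob.simps)
  also have "\<dots> = (\<integral>\<^sup>+u. ennreal (taboo s n u) * (\<integral>\<^sup>+x. ennreal (Q u x) * Phi x \<partial>count_space UNIV)
      \<partial>count_space UNIV)"
    by (simp add: nn_integral_multc[symmetric] nn_integral_cmult[symmetric] mult.assoc)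
      (subst nn_integral_count_space_swap, rule refl)
  finally have "?T (Suc n) + ?W \<le> (\<integral>\<^sup>+u. ennreal (taboo s n u) *
      (\<integral>\<^sup>+x. ennreal (Q u x) * Phi x \<partial>count_space UNIV) \<partial>count_space UNIV) + ?W"
    by (rule add_right_mono)
  also have "\<dots> = (\<integral>\<^sup>+u. ennreal (taboo s n u) *
      ((\<integral>\<^sup>+x. ennreal (Q u x) * Phi x \<partial>count_space UNIV) + w u) \<partial>count_space UNIV)"
    by (subst nn_integral_add[symmetric]) (auto simp: distrib_left)
  also have "\<dots> \<le> (\<integral>\<^sup>+u. ennreal (taboo s n u) * (Phi u + C) \<partial>count_space UNIV)"
  proof (intro nn_integral_mono)
    fix u
    show "ennreal (taboo s n u) * ((\<integral>\<^sup>+x. ennreal (Q u x) * Phi x \<partial>count_space UNIV) + w u)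
        \<le> ennreal (taboo s n u) * (Phi u + C)"
      using drift[of u] taboo_prob_s0[of s n]
      by (cases "u = s0") (auto intro: mult_left_mono simp del: taboo_prob.simps)
  qed
  also have "\<dots> = (\<integral>\<^sup>+u. ennreal (taboo s n u) * Phi u + C * ennreal (taboo s n u) \<partial>count_space UNIV)"
    by (intro nn_integral_cong) (simp add: distrib_right mult.commute)
  also have "\<dots> = ?T n + C * survival s n"
    unfolding survival_def by (simp add: nn_integral_add nn_integral_cmult)
  finally show ?thesis .
qed

text \<open>The comparison theorem of Meyn and Tweedie, for the \<open>w\<close>-cost accumulated before the chain hits
  \<open>s0\<close>, truncated at time \<open>K\<close>.\<close>

lemma taboo_comparison:
  fixes Phi w :: "'s \<Rightarrow> ennreal" and C :: ennreal
  assumes drift: "\<And>u. u \<noteq> s0 \<Longrightarrow> (\<integral>\<^sup>+x. ennreal (Q u x) * Phi x \<partial>count_space UNIV) + w u \<le> Phi u + C"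
  shows "(\<Sum>n<K. \<integral>\<^sup>+u. ennreal (taboo s n u) * w u \<partial>count_space UNIV) \<le> Phi s + C * (\<Sum>n<K. survival s n)"
proof -
  define T where "T n = (\<integral>\<^sup>+u. ennreal (taboo s n u) * Phi u \<partial>count_space UNIV)" for n
  define W where "W n = (\<integral>\<^sup>+u. ennreal (taboo s n u) * w u \<partial>count_space UNIV)" for n
  have partial: "T K + (\<Sum>n<K. W n) \<le> T 0 + C * (\<Sum>n<K. survival s n)" for K
  proof (induction K)
    case 0
    then show ?case by simp
  next
    case (Suc K)
    have "T (Suc K) + (\<Sum>n<Suc K. W n) = (T (Suc K) + W K) + (\<Sum>n<K. W n)"
      by (simp add: add_ac)
    also have "\<dots> \<le> (T K + C * survival s K) + (\<Sum>n<K. W n)"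
      unfolding T_def W_def using drift by (intro add_right_mono taboo_comparison_step)
    also have "\<dots> = (T K + (\<Sum>n<K. W n)) + C * survival s K"
      by (simp add: add_ac)
    also have "\<dots> \<le> (T 0 + C * (\<Sum>n<K. survival s n)) + C * survival s K"
      using Suc by (rule add_right_mono)
    also have "\<dots> = T 0 + C * (\<Sum>n<Suc K. survival s n)"
      by (simp add: add_ac distrib_left)
    finally show ?case .
  qed
  have "T 0 \<le> (\<integral>\<^sup>+u. Phi s * indicator {s} u \<partial>count_space UNIV)"
    unfolding T_def by (intro nn_integral_mono) (auto split: split_indicator)
  then have "T 0 \<le> Phi s"
    by (simp only: nn_integral_count_space_point)
  have "(\<Sum>n<K. W n) \<le> T K + (\<Sum>n<K. W n)"
    by simp
  also have "\<dots> \<le> Phi s + C * (\<Sum>n<K. survival s n)"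
    using partial[of K] \<open>T 0 \<le> Phi s\<close> by (meson add_right_mono order_trans)
  finally show ?thesis
    unfolding W_def .
qed

text \<open>\<open>trunc_hitting x H\<close> is the expected value of \<open>min \<tau> H\<close> for the hitting time \<open>\<tau>\<close> of \<open>s0\<close>.\<close>

definition trunc_hitting :: "'s \<Rightarrow> nat \<Rightarrow> ennreal" where
  "trunc_hitting x H = (\<Sum>n<H. survival x n)"

lemma trunc_hitting_le: "trunc_hitting x H \<le> of_nat H"
proof -
  have "trunc_hitting x H \<le> (\<Sum>n<H. 1)"
    unfolding trunc_hitting_def by (intro sum_mono survival_le_1)
  then show ?thesis by simp
qed

lemma trunc_hitting_drift:
  assumes "u \<noteq> s0"
  shows "(\<integral>\<^sup>+x. ennreal (Q u x) * trunc_hitting x H \<partial>count_space UNIV) + 1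
       = trunc_hitting u H + survival u H"
proof -
  have "(\<integral>\<^sup>+x. ennreal (Q u x) * trunc_hitting x H \<partial>count_space UNIV)
      = (\<Sum>n<H. \<integral>\<^sup>+x. ennreal (Q u x) * survival x n \<partial>count_space UNIV)"
    unfolding trunc_hitting_def by (simp add: sum_distrib_left nn_integral_sum)
  also have "\<dots> = (\<Sum>n<H. survival u (Suc n))"
    using survival_Suc_first_step[OF assms] by simp
  finally have "(\<integral>\<^sup>+x. ennreal (Q u x) * trunc_hitting x H \<partial>count_space UNIV) + 1
      = (\<Sum>n<H. survival u (Suc n)) + survival u 0"
    using survival_0 assms by simp
  also have "\<dots> = trunc_hitting u H + survival u H"
    unfolding trunc_hitting_def
    using sum.lessThan_Suc_shift[of "survival u" H] sum.lessThan_Suc[of "survival u" H]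
    by (simp add: add.commute)
  finally show ?thesis .
qed

lemma trunc_hitting_drift_le:
  assumes "u \<noteq> s0" and "survival u H + d \<le> 1"
  shows "(\<integral>\<^sup>+x. ennreal (Q u x) * trunc_hitting x H \<partial>count_space UNIV) + d \<le> trunc_hitting u H"
proof -
  let ?I = "(\<integral>\<^sup>+x. ennreal (Q u x) * trunc_hitting x H \<partial>count_space UNIV)"
  have "(?I + d) + 1 = (?I + 1) + d"
    by (simp add: add_ac)
  also have "\<dots> = trunc_hitting u H + (survival u H + d)"
    using trunc_hitting_drift[OF assms(1)] by (simp add: add_ac)
  also have "\<dots> \<le> trunc_hitting u H + 1"
    using assms(2) by (rule add_left_mono)
  finally show ?thesis
    by (simp add: ennreal_add_left_cancel_le add.commute)
qed

lemma trunc_hitting_drift_indicator: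
  assumes "u \<noteq> s0" and hit: "\<And>x. x \<in> A \<Longrightarrow> x \<noteq> s0 \<Longrightarrow> survival x H + ennreal d \<le> 1"
  shows "(\<integral>\<^sup>+x. ennreal (Q u x) * trunc_hitting x H \<partial>count_space UNIV) + ennreal d * indicator A u
      \<le> trunc_hitting u H"
proof (cases "u \<in> A")
  case True
  then show ?thesis
    using trunc_hitting_drift_le[OF \<open>u \<noteq> s0\<close> hit[OF True \<open>u \<noteq> s0\<close>]] by simp
next
  case False
  then show ?thesis
    using trunc_hitting_drift_le[OF \<open>u \<noteq> s0\<close>, of H 0] survival_le_1 by simp
qed

lemma ennreal_drift_le:
  fixes f :: "'s \<Rightarrow> real" and a b :: real
  assumes f_nonneg: "\<And>x. f x \<ge> 0" and "a \<ge> 0" and "b \<ge> 0"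
    and summable: "(\<lambda>x. Q u x * f x) summable_on UNIV"
    and drift: "(\<Sum>\<^sub>\<infinity>x. Q u x * f x) - f u \<le> a - b"
  shows "(\<integral>\<^sup>+x. ennreal (Q u x) * ennreal (f x) \<partial>count_space UNIV) + ennreal b \<le> ennreal (f u) + ennreal a"
proof -
  have "(\<integral>\<^sup>+x. ennreal (Q u x) * ennreal (f x) \<partial>count_space UNIV) = ennreal (\<Sum>\<^sub>\<infinity>x. Q u x * f x)"
    using nn_integral_count_space_eq_infsum[OF _ summable] P_pi_nonneg f_nonneg
    by (simp add: ennreal_mult)
  moreover have "(\<Sum>\<^sub>\<infinity>x. Q u x * f x) \<ge> 0"
    using P_pi_nonneg f_nonneg by (simp add: infsum_nonneg)
  ultimately have "(\<integral>\<^sup>+x. ennreal (Q u x) * ennreal (f x) \<partial>count_space UNIV) + ennreal b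
      = ennreal ((\<Sum>\<^sub>\<infinity>x. Q u x * f x) + b)"
    using \<open>b \<ge> 0\<close> by (simp add: ennreal_plus)
  also have "\<dots> \<le> ennreal (f u + a)"
    using drift by (intro ennreal_leI) simp
  also have "\<dots> = ennreal (f u) + ennreal a"
    using f_nonneg[of u] \<open>a \<ge> 0\<close> by (simp add: ennreal_plus)
  finally show ?thesis .
qed

lemma ennreal_plus_trunc_hitting_le:
  assumes "a \<ge> 0" and "lam \<ge> 0"
  shows "ennreal a + ennreal lam * trunc_hitting x H \<le> ennreal (a + lam * H)"
proof -
  have "ennreal a + ennreal lam * trunc_hitting x H \<le> ennreal a + ennreal lam * of_nat H"
    by (intro add_left_mono mult_left_mono trunc_hitting_le) auto
  also have "\<dots> = ennreal (a + lam * H)"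
    using assms by (simp add: ennreal_plus ennreal_mult[symmetric] ennreal_of_nat_eq_real_of_nat)
  finally show ?thesis .
qed

text \<open>The Lyapunov function is \<open>f + (2C/d) \<cdot> trunc_hitting\<close>: the hitting-time term contributes a
  drift of \<open>-2C\<close> on the finite set \<open>A\<close>, where the cost \<open>g\<close> may be small.\<close>

lemma lyapunov_drift:
  fixes f g :: "'s \<Rightarrow> real" and C d :: real
  assumes f_nonneg: "\<And>x. f x \<ge> 0" and "g u \<ge> 0" and "C > 0" and "d > 0"
    and f_summable: "(\<lambda>x. Q u x * f x) summable_on UNIV"
    and f_drift: "(\<Sum>\<^sub>\<infinity>x. Q u x * f x) - f u \<le> C - g u"
    and hit: "\<And>x. x \<in> A \<Longrightarrow> x \<noteq> s0 \<Longrightarrow> survival x H + ennreal d \<le> 1"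
    and "u \<noteq> s0"
  shows "(\<integral>\<^sup>+x. ennreal (Q u x) * (ennreal (f x) + ennreal (2 * C / d) * trunc_hitting x H) \<partial>count_space UNIV)
           + (ennreal (g u) + ennreal (2 * C) * indicator A u)
         \<le> ennreal (f u) + ennreal (2 * C / d) * trunc_hitting u H + ennreal C"
proof -
  define lam where "lam = 2 * C / d"
  have lam: "lam \<ge> 0" "lam * d = 2 * C"
    unfolding lam_def using assms by auto
  have "(\<integral>\<^sup>+x. ennreal (Q u x) * (ennreal (f x) + ennreal lam * trunc_hitting x H) \<partial>count_space UNIV)
      = (\<integral>\<^sup>+x. ennreal (Q u x) * ennreal (f x) \<partial>count_space UNIV)
        + ennreal lam * (\<integral>\<^sup>+x. ennreal (Q u x) * trunc_hitting x H \<partial>count_space UNIV)"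
    by (simp add: distrib_left nn_integral_add nn_integral_cmult[symmetric] mult.left_commute)
  then have "(\<integral>\<^sup>+x. ennreal (Q u x) * (ennreal (f x) + ennreal lam * trunc_hitting x H) \<partial>count_space UNIV)
      + (ennreal (g u) + ennreal (2 * C) * indicator A u)
      = ((\<integral>\<^sup>+x. ennreal (Q u x) * ennreal (f x) \<partial>count_space UNIV) + ennreal (g u))
        + ennreal lam * ((\<integral>\<^sup>+x. ennreal (Q u x) * trunc_hitting x H \<partial>count_space UNIV)
          + ennreal d * indicator A u)"
    using lam \<open>d > 0\<close>
    by (simp add: distrib_left add_ac mult.assoc[symmetric] ennreal_mult[symmetric])
  also have "\<dots> \<le> (ennreal (f u) + ennreal C) + ennreal lam * trunc_hitting u H"
    using \<open>C > 0\<close> \<open>g u \<ge> 0\<close>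
    by (intro add_mono ennreal_drift_le[OF f_nonneg _ _ f_summable f_drift] mult_left_mono
        trunc_hitting_drift_indicator[OF \<open>u \<noteq> s0\<close> hit]) auto
  finally show ?thesis
    unfolding lam_def by (simp add: add_ac)
qed

text \<open>The accumulated cost \<open>w = g + 2C \<cdot> 1\<^sub>A\<close> dominates \<open>2C\<close>, i.e. twice the constant of the
  comparison theorem; this absorbs the \<open>C\<close>-term on its right-hand side.\<close>

lemma taboo_cost_bound:
  fixes f g :: "'s \<Rightarrow> real" and C d :: real
  assumes f_nonneg: "\<And>x. f x \<ge> 0" and g_nonneg: "\<And>x. g x \<ge> 0" and "C > 0" and "d > 0"
    and f_drift: "\<And>u. (\<lambda>x. Q u x * f x) summable_on UNIV \<and> (\<Sum>\<^sub>\<infinity>x. Q u x * f x) - f u \<le> C - g u"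
    and outside: "\<And>x. x \<notin> A \<Longrightarrow> 2 * C \<le> g x"
    and hit: "\<And>x. x \<in> A \<Longrightarrow> x \<noteq> s0 \<Longrightarrow> survival x H + ennreal d \<le> 1"
  shows "(\<Sum>n<K. \<integral>\<^sup>+u. ennreal (taboo s n u) * ennreal (g u) \<partial>count_space UNIV)
           \<le> ennreal (2 * (f s + 2 * C / d * H))"
    and "(\<Sum>n<K. \<integral>\<^sup>+u. ennreal (taboo s n u) * ennreal (2 * C) \<partial>count_space UNIV)
           \<le> ennreal (2 * (f s + 2 * C / d * H))"
proof -
  define w where "w u = ennreal (g u) + ennreal (2 * C) * indicator A u" for u
  define Phi where "Phi x = ennreal (f x) + ennreal (2 * C / d) * trunc_hitting x H" for x
  define X where "X = (\<Sum>n<K. \<integral>\<^sup>+u. ennreal (taboo s n u) * w u \<partial>count_space UNIV)"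
  have X_le: "X \<le> Phi s + ennreal C * (\<Sum>n<K. survival s n)"
    unfolding X_def
  proof (rule taboo_comparison)
    fix u assume "u \<noteq> s0"
    then show "(\<integral>\<^sup>+x. ennreal (Q u x) * Phi x \<partial>count_space UNIV) + w u \<le> Phi u + ennreal C"
      unfolding Phi_def w_def
      using lyapunov_drift[of f g u C d A H] f_nonneg g_nonneg f_drift[of u] hit \<open>C > 0\<close> \<open>d > 0\<close>
      by blast
  qed
  have "ennreal (2 * C) \<le> w u" for u
    using outside[of u] unfolding w_def by (cases "u \<in> A") (auto intro: ennreal_leI)
  then have const_le: "(\<Sum>n<K. \<integral>\<^sup>+u. ennreal (taboo s n u) * ennreal (2 * C) \<partial>count_space UNIV) \<le> X"
    unfolding X_def by (intro sum_mono nn_integral_mono mult_left_mono) auto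
  have const_eq: "(\<Sum>n<K. \<integral>\<^sup>+u. ennreal (taboo s n u) * ennreal (2 * C) \<partial>count_space UNIV)
      = 2 * ennreal C * (\<Sum>n<K. survival s n)"
    unfolding survival_def sum_distrib_left using \<open>C > 0\<close>
    by (intro sum.cong refl) (simp add: nn_integral_multc nn_integral_cmult ennreal_mult mult.commute)
  have Phi_le: "Phi s \<le> ennreal (f s + 2 * C / d * H)"
    unfolding Phi_def using f_nonneg \<open>C > 0\<close> \<open>d > 0\<close> by (intro ennreal_plus_trunc_hitting_le) auto
  have "survival s n \<noteq> \<infinity>" for n
    using neq_top_trans[OF ennreal_one_neq_top survival_le_1] by simp
  then have "X \<le> 2 * Phi s"
    using X_le const_le Phi_le unfolding const_eq by (intro ennreal_absorb_le) (auto simp: top_unique)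
  also have "\<dots> \<le> 2 * ennreal (f s + 2 * C / d * H)"
    using Phi_le by (rule mult_left_mono) simp
  also have "\<dots> = ennreal (2 * (f s + 2 * C / d * H))"
    by (simp only: ennreal_mult'[OF zero_le_numeral] ennreal_numeral)
  finally have X_bound: "X \<le> ennreal (2 * (f s + 2 * C / d * H))" .
  have "(\<Sum>n<K. \<integral>\<^sup>+u. ennreal (taboo s n u) * ennreal (g u) \<partial>count_space UNIV) \<le> X"
    unfolding X_def w_def by (intro sum_mono nn_integral_mono mult_left_mono) auto
  then show "(\<Sum>n<K. \<integral>\<^sup>+u. ennreal (taboo s n u) * ennreal (g u) \<partial>count_space UNIV)
      \<le> ennreal (2 * (f s + 2 * C / d * H))"
    using X_bound by (rule order_trans)
  from const_le X_bound show "(\<Sum>n<K. \<integral>\<^sup>+u. ennreal (taboo s n u) * ennreal (2 * C) \<partial>count_space UNIV)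
      \<le> ennreal (2 * (f s + 2 * C / d * H))"
    by (rule order_trans)
qed

lemma taboo_weighted_has_sum:
  fixes phi :: "'s \<Rightarrow> real"
  assumes phi_nonneg: "\<And>x. phi x \<ge> 0"
    and partial_le: "\<And>K. (\<Sum>n<K. \<integral>\<^sup>+u. ennreal (taboo s n u) * ennreal (phi u) \<partial>count_space UNIV) \<le> ennreal B"
    and "B \<ge> 0"
  obtains S where "((\<lambda>(n, x). taboo s n x * phi x) has_sum S) UNIV" and "0 \<le> S" and "S \<le> B"
proof -
  define b where "b n = (\<Sum>\<^sub>\<infinity>u. taboo s n u * phi u)" for n
  have term_nonneg: "taboo s n u * phi u \<ge> 0" for n u
    by (simp add: taboo_prob_nonneg phi_nonneg)
  have row: "(\<lambda>u. taboo s n u * phi u) summable_on UNIV \<and>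
      ennreal (b n) = (\<integral>\<^sup>+u. ennreal (taboo s n u) * ennreal (phi u) \<partial>count_space UNIV)" for n
  proof -
    have "(\<integral>\<^sup>+u. ennreal (taboo s n u) * ennreal (phi u) \<partial>count_space UNIV)
        \<le> (\<Sum>k<Suc n. \<integral>\<^sup>+u. ennreal (taboo s k u) * ennreal (phi u) \<partial>count_space UNIV)"
      by (rule member_le_sum) auto
    also have "\<dots> \<le> ennreal B"
      by (rule partial_le)
    finally have "(\<integral>\<^sup>+u. ennreal (taboo s n u * phi u) \<partial>count_space UNIV) \<noteq> \<infinity>"
      by (auto simp: ennreal_mult taboo_prob_nonneg phi_nonneg top_unique)
    then have "(\<lambda>u. taboo s n u * phi u) summable_on UNIV"
      by (rule summable_on_if_nn_integral_finite[rotated]) (rule term_nonneg)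
    moreover from this have "ennreal (b n) = (\<integral>\<^sup>+u. ennreal (taboo s n u * phi u) \<partial>count_space UNIV)"
      unfolding b_def by (rule nn_integral_count_space_eq_infsum[symmetric, rotated]) (rule term_nonneg)
    ultimately show ?thesis
      by (simp add: ennreal_mult taboo_prob_nonneg phi_nonneg)
  qed
  have "(\<Sum>n<K. b n) \<le> B" for K
  proof -
    have "ennreal (\<Sum>n<K. b n) = (\<Sum>n<K. ennreal (b n))"
      unfolding b_def using term_nonneg by (simp add: infsum_nonneg)
    also have "\<dots> \<le> ennreal B"
      using row partial_le[of K] by simp
    finally show ?thesis
      using \<open>B \<ge> 0\<close> by simp
  qed
  moreover have "((\<lambda>x. (\<lambda>(n, x). taboo s n x * phi x) (n, x)) has_sum b n) UNIV" for n
    using row unfolding b_def by (auto intro: has_sum_infsum)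
  ultimately show ?thesis
    using has_sum_prod_if_row_sums_bounded[of "\<lambda>(n, x). taboo s n x * phi x" b B] term_nonneg that
    by auto
qed

lemma taboo_cost_has_sum:
  fixes f g :: "'s \<Rightarrow> real" and C d :: real
  assumes f_nonneg: "\<And>x. f x \<ge> 0" and g_nonneg: "\<And>x. g x \<ge> 0" and "C > 0" and "d > 0"
    and f_drift: "\<And>u. (\<lambda>x. Q u x * f x) summable_on UNIV \<and> (\<Sum>\<^sub>\<infinity>x. Q u x * f x) - f u \<le> C - g u"
    and outside: "\<And>x. x \<notin> A \<Longrightarrow> 2 * C \<le> g x"
    and hit: "\<And>x. x \<in> A \<Longrightarrow> x \<noteq> s0 \<Longrightarrow> survival x H + ennreal d \<le> 1"
  obtains S1 S2 where "((\<lambda>(n, x). taboo s n x * (2 * C)) has_sum S1) UNIV" and "0 \<le> S1"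
    and "((\<lambda>(n, x). taboo s n x * g x) has_sum S2) UNIV" and "S2 \<le> 2 * (f s + 2 * C / d * H)"
proof -
  note bounds = taboo_cost_bound[OF f_nonneg g_nonneg \<open>C > 0\<close> \<open>d > 0\<close> f_drift outside hit]
  have B_nonneg: "2 * (f s + 2 * C / d * H) \<ge> 0"
    using f_nonneg[of s] \<open>C > 0\<close> \<open>d > 0\<close> by simp
  obtain S1 where "((\<lambda>(n, x). taboo s n x * (2 * C)) has_sum S1) UNIV" and "0 \<le> S1"
  proof (rule taboo_weighted_has_sum[where phi = "\<lambda>_. 2 * C", OF _ bounds(2) B_nonneg])
    show "0 \<le> 2 * C"
      using \<open>C > 0\<close> by simp
  qed (use that in blast)
  moreover obtain S2 where "((\<lambda>(n, x). taboo s n x * g x) has_sum S2) UNIV"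
    and "S2 \<le> 2 * (f s + 2 * C / d * H)"
    by (rule taboo_weighted_has_sum[OF g_nonneg bounds(1) B_nonneg]) (use that in blast)
  ultimately show ?thesis
    by (rule that)
qed

lemma uniform_hitting:
  assumes "irreducible P pol" and "finite A"
  obtains H d where "d > 0" and "\<And>x. x \<in> A \<Longrightarrow> x \<noteq> s0 \<Longrightarrow> survival x H + ennreal d \<le> 1"
proof -
  have "\<forall>x. \<exists>n. Pn n x s0 > 0"
    using assms(1) unfolding irreducible_def by blast
  then obtain n where n: "\<And>x. Pn (n x) x s0 > 0"
    by metis
  define H where "H = Max (insert 0 (n ` A))"
  define d where "d = Min (insert 1 ((\<lambda>x. Pn (n x) x s0) ` A))"
  have "d > 0"
    unfolding d_def using assms(2) n by (simp add: Min_gr_iff)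
  moreover have "survival x H + ennreal d \<le> 1" if "x \<in> A" for x
  proof -
    have "survival x H \<le> survival x (n x)"
      unfolding H_def using assms(2) that by (intro survival_antimono Max_ge) auto
    moreover have "ennreal d \<le> ennreal (Pn (n x) x s0)"
      unfolding d_def using assms(2) that by (intro ennreal_leI Min_le) auto
    ultimately have "survival x H + ennreal d \<le> survival x (n x) + ennreal (Pn (n x) x s0)"
      by (rule add_mono)
    also have "\<dots> \<le> 1"
      by (rule survival_add_P_pi_n_le_1)
    finally show ?thesis .
  qed
  ultimately show ?thesis
    using that by blast
qed

lemma relative_value_lower_bound_at:
  fixes rp f :: "'s \<Rightarrow> real" and c1 C d R J :: real
  assumes f_nonneg: "\<And>x. f x \<ge> 0" and "c1 > 0" and "C > 0" and "d > 0"
    and rp_le: "\<And>x. rp x \<le> R" and "J \<le> R"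
    and f_drift: "\<And>u. (\<lambda>x. Q u x * f x) summable_on UNIV \<and>
                     (\<Sum>\<^sub>\<infinity>x. Q u x * f x) - f u \<le> C - c1 * (R - rp u)"
    and outside: "\<And>x. x \<notin> A \<Longrightarrow> 2 * C \<le> c1 * (R - rp x)"
    and hit: "\<And>x. x \<in> A \<Longrightarrow> x \<noteq> s0 \<Longrightarrow> survival x H + ennreal d \<le> 1"
  shows "\<exists>V. ((\<lambda>(t, x). taboo s t x * (rp x - J)) has_sum V) UNIV \<and>
           - (2 / c1) * f s - 2 * (2 * C / d) * H / c1 \<le> V"
proof -
  define g where "g x = c1 * (R - rp x)" for x
  have g_nonneg: "g x \<ge> 0" for x
    unfolding g_def using \<open>c1 > 0\<close> rp_le[of x] by simp
  have g_drift: "\<And>u. (\<lambda>x. Q u x * f x) summable_on UNIV \<and> (\<Sum>\<^sub>\<infinity>x. Q u x * f x) - f u \<le> C - g u"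
    and g_outside: "\<And>x. x \<notin> A \<Longrightarrow> 2 * C \<le> g x"
    using f_drift outside unfolding g_def by auto
  obtain S1 S2 where S1: "((\<lambda>(n, x). taboo s n x * (2 * C)) has_sum S1) UNIV" "0 \<le> S1"
    and S2: "((\<lambda>(n, x). taboo s n x * g x) has_sum S2) UNIV" "S2 \<le> 2 * (f s + 2 * C / d * H)"
    by (rule taboo_cost_has_sum[where f = f and g = g and C = C and d = d and A = A and H = H and s = s,
          OF f_nonneg g_nonneg \<open>C > 0\<close> \<open>d > 0\<close> g_drift g_outside hit])
  have split: "(\<lambda>(t, x). taboo s t x * (rp x - J))
      = (\<lambda>p. (R - J) / (2 * C) * (\<lambda>(n, x). taboo s n x * (2 * C)) p
            + (- 1 / c1) * (\<lambda>(n, x). taboo s n x * g x) p)"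
    unfolding g_def using \<open>C > 0\<close> \<open>c1 > 0\<close> by (auto simp: field_simps)
  have "((\<lambda>(t, x). taboo s t x * (rp x - J)) has_sum ((R - J) / (2 * C) * S1 + (- 1 / c1) * S2)) UNIV"
    unfolding split by (intro has_sum_add has_sum_cmult_right S1(1) S2(1))
  moreover have "- (2 / c1) * f s - 2 * (2 * C / d) * H / c1 \<le> (R - J) / (2 * C) * S1 + (- 1 / c1) * S2"
  proof -
    have "(R - J) / (2 * C) * S1 \<ge> 0"
      using \<open>J \<le> R\<close> \<open>C > 0\<close> S1(2) by simp
    moreover have "S2 / c1 \<le> 2 * (f s + 2 * C / d * H) / c1"
      using S2(2) \<open>c1 > 0\<close> by (simp add: divide_right_mono)
    moreover have "2 * (f s + 2 * C / d * H) / c1 = (2 / c1) * f s + 2 * (2 * C / d) * H / c1"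
      by (simp add: add_divide_distrib)
    moreover have "(- 1 / c1) * S2 = - (S2 / c1)"
      by simp
    ultimately show ?thesis
      by linarith
  qed
  ultimately show ?thesis
    by blast
qed

lemma relative_value_lower_bound:
  fixes rp f :: "'s \<Rightarrow> real" and c1 c2 R J :: real
  assumes "irreducible P pol"
    and f_nonneg: "\<And>x. f x \<ge> 0" and "c1 > 0" and "c2 \<ge> 0"
    and f_drift: "\<And>u. (\<lambda>x. Q u x * f x) summable_on UNIV \<and> (\<Sum>\<^sub>\<infinity>x. Q u x * f x) - f u \<le> c1 * rp u + c2"
    and rp_le: "\<And>x. rp x \<le> R" and "R > 0" and "J \<le> R"
    and superlevel: "\<And>z. finite {x. z \<le> rp x}"
  obtains c4 where "c4 \<ge> 0"
    and "\<And>s. \<exists>V. ((\<lambda>(t, x). taboo s t x * (rp x - J)) has_sum V) UNIV \<and> - (2 / c1) * f s - c4 \<le> V"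
proof -
  define C where "C = c2 + c1 * R"
  define A where "A = {x. c1 * (R - rp x) < 2 * C}"
  have "C > 0"
    unfolding C_def using \<open>c1 > 0\<close> \<open>c2 \<ge> 0\<close> \<open>R > 0\<close> by (simp add: add_nonneg_pos)
  have "A \<subseteq> {x. R - 2 * C / c1 \<le> rp x}"
    unfolding A_def using \<open>c1 > 0\<close> by (auto simp: field_simps)
  then have "finite A"
    using superlevel by (rule finite_subset)
  then obtain d H where "d > 0" and hit: "\<And>x. x \<in> A \<Longrightarrow> x \<noteq> s0 \<Longrightarrow> survival x H + ennreal d \<le> 1"
    by (rule uniform_hitting[OF \<open>irreducible P pol\<close>]) blast
  have C_drift: "\<And>u. (\<lambda>x. Q u x * f x) summable_on UNIV \<and> (\<Sum>\<^sub>\<infinity>x. Q u x * f x) - f u \<le> C - c1 * (R - rp u)"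
    using f_drift unfolding C_def by (simp add: algebra_simps)
  have outside: "\<And>x. x \<notin> A \<Longrightarrow> 2 * C \<le> c1 * (R - rp x)"
    unfolding A_def by simp
  show ?thesis
  proof (rule that)
    show "2 * (2 * C / d) * H / c1 \<ge> 0"
      using \<open>c1 > 0\<close> \<open>C > 0\<close> \<open>d > 0\<close> by simp
    show "\<exists>V. ((\<lambda>(t, x). taboo s t x * (rp x - J)) has_sum V) UNIV \<and>
        - (2 / c1) * f s - 2 * (2 * C / d) * H / c1 \<le> V" for s
      by (rule relative_value_lower_bound_at[where f = f and rp = rp and A = A and H = H,
            OF f_nonneg \<open>c1 > 0\<close> \<open>C > 0\<close> \<open>d > 0\<close> rp_le \<open>J \<le> R\<close> C_drift outside hit])
  qed
qed

end

lemma r_pi_le_r_max: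
  assumes "policy pol"
  shows "r_pi r pol x \<le> r_max r x"
proof -
  have "r x a \<le> r_max r x" for a
    unfolding r_max_def by (intro Max_ge) auto
  then have "(\<Sum>a\<in>UNIV. pol x a * r x a) \<le> (\<Sum>a\<in>UNIV. pol x a * r_max r x)"
    using assms unfolding policy_def by (intro sum_mono mult_left_mono) auto
  also have "\<dots> = r_max r x"
    using assms unfolding policy_def by (simp flip: sum_distrib_right)
  finally show ?thesis
    unfolding r_pi_def .
qed

lemma finite_r_pi_superlevel:
  assumes "policy pol" and "assumption_1b r"
  shows "finite {x. z \<le> r_pi r pol x}"
proof (rule finite_subset)
  show "{x. z \<le> r_pi r pol x} \<subseteq> {x. z \<le> r_max r x}"
    using r_pi_le_r_max[OF assms(1)] order_trans by blast
  show "finite {x. z \<le> r_max r x}"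
    using assms(2) unfolding assumption_1b_def by blast
qed

lemma bounded_above_if_finite_superlevel:
  fixes g :: "'b \<Rightarrow> real"
  assumes "finite {x. 0 \<le> g x}"
  obtains R where "R > 0" and "\<And>x. g x \<le> R"
proof
  define R where "R = Max (insert 1 (g ` {x. 0 \<le> g x}))"
  show "R > 0"
    unfolding R_def using assms by (simp add: Max_gr_iff)
  show "g x \<le> R" for x
  proof (cases "0 \<le> g x")
    case True
    then show ?thesis
      unfolding R_def using assms by (intro Max_ge) auto
  next
    case False
    then show ?thesis
      using \<open>R > 0\<close> by simp
  qed
qed

text \<open>If \<open>\<mu> \<cdot> r\<close> is not summable, \<open>avg_reward\<close> is \<open>0\<close> by the junk value of \<open>infsum\<close>; hence
  \<open>R \<ge> 0\<close>.\<close>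

lemma avg_reward_le:
  assumes "stationary P pol mu" and "\<And>x. r_pi r pol x \<le> R" and "R \<ge> 0"
  shows "avg_reward r pol mu \<le> R"
proof (cases "(\<lambda>s. mu s * r_pi r pol s) summable_on UNIV")
  case True
  have mu: "(mu has_sum 1) UNIV" "\<And>s. mu s \<ge> 0"
    using assms(1) unfolding stationary_def by auto
  have "avg_reward r pol mu \<le> (\<Sum>\<^sub>\<infinity>s. mu s * R)"
    unfolding avg_reward_def using True has_sum_cmult_left[OF mu(1), of R] assms(2) mu(2)
    by (intro infsum_mono) (auto intro: mult_left_mono has_sum_imp_summable)
  also have "\<dots> = R"
    using infsumI[OF has_sum_cmult_left[OF mu(1), of R]] by simp
  finally show ?thesis .
next
  case False
  then show ?thesis
    using assms(3) unfolding avg_reward_def by (simp add: infsum_not_exists)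
qed

theorem mainTheorem6:
  fixes P :: "'s::countable \<Rightarrow> 'a::finite \<Rightarrow> 's \<Rightarrow> real"
    and r :: "'s \<Rightarrow> 'a \<Rightarrow> real"
    and pol :: "'s \<Rightarrow> 'a \<Rightarrow> real"
    and s0 :: 's
    and mu :: "'s \<Rightarrow> real"
    and f :: "'s \<Rightarrow> real"
    and c1 c2 :: real
  assumes "infinite (UNIV :: 's set)"
    and "mdp P"
    and "assumption_1b r"
    and "policy pol"
    and "ergodic P pol"
    and "stationary P pol mu"
    and "\<forall>s. f s \<ge> 0"
    and "c1 > 0" and "c2 \<ge> 0"
    and "\<forall>s. (\<lambda>s'. P_pi P pol s s' * f s') summable_on UNIV \<and>
             (\<Sum>\<^sub>\<infinity>s'. P_pi P pol s s' * f s') - f s \<le> c1 * r_pi r pol s + c2"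
  shows "\<exists>c3 c4. c3 = 2 / c1 \<and> c3 \<ge> 0 \<and> c4 \<ge> 0 \<and>
           (\<forall>s. V_terms P r pol s0 (avg_reward r pol mu) s summable_on UNIV \<and>
                rel_value P r pol s0 (avg_reward r pol mu) s \<ge> - c3 * f s - c4)"
proof -
  interpret policy_chain P pol s0
    using assms(2,4) by unfold_locales
  have superlevel: "\<And>z. finite {x. z \<le> r_pi r pol x}"
    using finite_r_pi_superlevel[OF assms(4,3)] .
  obtain R where "R > 0" and r_le: "\<And>x. r_pi r pol x \<le> R"
    using bounded_above_if_finite_superlevel[OF superlevel] by blast
  have "avg_reward r pol mu \<le> R"
    using avg_reward_le[OF assms(6) r_le] \<open>R > 0\<close> by simp
  moreover have "irreducible P pol"
    using assms(5) unfolding ergodic_def by blast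
  ultimately obtain c4 where "c4 \<ge> 0" and bound: "\<And>s. \<exists>V.
      (V_terms P r pol s0 (avg_reward r pol mu) s has_sum V) UNIV \<and> - (2 / c1) * f s - c4 \<le> V"
    using relative_value_lower_bound[of f c1 c2 "r_pi r pol" R "avg_reward r pol mu"]
      assms(7-10) r_le \<open>R > 0\<close> superlevel
    unfolding V_terms_def by blast
  have "V_terms P r pol s0 (avg_reward r pol mu) s summable_on UNIV \<and>
      rel_value P r pol s0 (avg_reward r pol mu) s \<ge> - (2 / c1) * f s - c4" for s
    using bound[of s] unfolding rel_value_def by (auto intro: has_sum_imp_summable simp: infsumI)
  then show ?thesis
    using \<open>c1 > 0\<close> \<open>c4 \<ge> 0\<close> by auto
qed

end
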